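(* Let $m,n,d,e$ be positive integers with $m=2n$ and $e=\gcd(n,d)=\gcd(m,d)$, and let $s\ge0$ and $u\ge1$ be integers. If $H$ is an $\mathbb{F}_{2^e}$-subspace of $\mathbb{F}_{2^e}^u$ of dimension $i$, then \[|W_{s,u,H}|=2^{mi}\,|V_{s,u-i}|.\]
   Context: For integers $s\ge0$ and $u\ge1$, $V_{s,u}$ denotes the set of solutions $(x_1,\dots,x_{2u})\in\mathbb{F}_{2^m}^{2u}$ of the system \[\sum_{i=1}^u\big(x_{2i-1}x_{2i}^{2^{(\frac{n}{e}-j)d}}+x_{2i-1}^{2^{(\frac{n}{e}-j)d}}x_{2i}\big)=0,\qquad j=0,1,\dots,s.\] By convention $|V_{s,0}|=1$. For $\vec x=(x_1,\dots,x_{2u})\in V_{s,u}$ let $Z(\vec x)=\{(c_1,\dots,c_u)\in\mathbb{F}_{2^e}^u\mid \sum_{i=1}^u c_ix_{2i}=0\}$. For a subspace $H\subseteq\mathbb{F}_{2^e}^u$ let $W_{s,u,H}=\{\vec x\in V_{s,u}\mid Z(\vec x)\supseteq H\}$. *)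

theory Defs
  imports Main "HOL-Library.FuncSet"
begin

text \<open>The field F_{2^m} is modelled by a finite field type 'a of characteristic 2 with
  2^m elements (stated in the theorem).  Vectors in F^k are extensional functions on
  the index set {1..k}.\<close>

text \<open>Frobenius power x^(2^k) for an integer k; since x^(2^m) = x in F_{2^m} this only
  depends on k mod m (this also covers negative exponents n/e - j < 0).\<close>
definition frob :: "nat \<Rightarrow> int \<Rightarrow> 'a::field \<Rightarrow> 'a" where
  "frob m k x = x ^ (2 ^ nat (k mod int m))"

definition subfld :: "nat \<Rightarrow> 'a::field set" where
  "subfld e = {c. c ^ (2 ^ e) = c}"

definition Vset :: "nat \<Rightarrow> nat \<Rightarrow> nat \<Rightarrow> nat \<Rightarrow> nat \<Rightarrow> nat \<Rightarrow> (nat \<Rightarrow> 'a::field) set" where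
  "Vset m n d e s u =
     {x \<in> PiE {1..2*u} (\<lambda>_. UNIV).
        \<forall>j\<le>s. (\<Sum>i=1..u.
                   x (2*i-1) * frob m ((int (n div e) - int j) * int d) (x (2*i))
                 + frob m ((int (n div e) - int j) * int d) (x (2*i-1)) * x (2*i)) = 0}"

definition Zset :: "nat \<Rightarrow> nat \<Rightarrow> (nat \<Rightarrow> 'a::field) \<Rightarrow> (nat \<Rightarrow> 'a) set" where
  "Zset e u x = {c \<in> PiE {1..u} (\<lambda>_. subfld e). (\<Sum>i=1..u. c i * x (2*i)) = 0}"

definition Wset :: "nat \<Rightarrow> nat \<Rightarrow> nat \<Rightarrow> nat \<Rightarrow> nat \<Rightarrow> nat \<Rightarrow> (nat \<Rightarrow> 'a::field) set
                     \<Rightarrow> (nat \<Rightarrow> 'a) set" where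
  "Wset m n d e s u H = {x \<in> Vset m n d e s u. H \<subseteq> Zset e u x}"

definition is_subspace :: "nat \<Rightarrow> nat \<Rightarrow> (nat \<Rightarrow> 'a::field) set \<Rightarrow> bool" where
  "is_subspace e u H \<longleftrightarrow>
     H \<subseteq> PiE {1..u} (\<lambda>_. subfld e) \<and>
     (\<lambda>t\<in>{1..u}. 0) \<in> H \<and>
     (\<forall>v\<in>H. \<forall>w\<in>H. (\<lambda>t\<in>{1..u}. v t + w t) \<in> H) \<and>
     (\<forall>c\<in>subfld e. \<forall>v\<in>H. (\<lambda>t\<in>{1..u}. c * v t) \<in> H)"

definition has_dim :: "nat \<Rightarrow> nat \<Rightarrow> (nat \<Rightarrow> 'a::field) set \<Rightarrow> nat \<Rightarrow> bool" where
  "has_dim e u H i \<longleftrightarrow>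
     (\<exists>b :: nat \<Rightarrow> nat \<Rightarrow> 'a.
        (\<forall>l<i. b l \<in> H) \<and>
        (\<forall>a. (\<forall>l<i. a l \<in> subfld e) \<longrightarrow>
             (\<forall>t\<in>{1..u}. (\<Sum>l<i. a l * b l t) = 0) \<longrightarrow> (\<forall>l<i. a l = 0)) \<and>
        (\<forall>h\<in>H. \<exists>a. (\<forall>l<i. a l \<in> subfld e) \<and>
             (\<forall>t\<in>{1..u}. h t = (\<Sum>l<i. a l * b l t))))"

end

theory Submission
  imports Defs "HOL-Computational_Algebra.Primes"
begin

text \<open>
  Fix an F_{2^e}-basis b_1, ..., b_i of H. The condition Z(x) \<supseteq> H says that the vector
  (x_2, x_4, ..., x_{2u}) of even coordinates is orthogonal to every b_l. Choose a coordinate k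
  with b_i(k) \<noteq> 0 and solve the i-th constraint for x_{2k}. Shifting every odd coordinate
  x_{2t-1} by the same coefficients times x_{2k-1} turns each equation of the system into the
  same equation on the remaining u - 1 pairs, because the Frobenius powers occurring there fix
  F_{2^e}. The coordinate x_{2k-1} is then free, contributing a factor 2^m, and Gaussian
  elimination of column k leaves i - 1 independent constraints on u - 1 coordinates, so
  induction on i gives 2^{mi} |V_{s,u-i}|.
\<close>

definition hom_fixing :: "('a::field \<Rightarrow> 'a) \<Rightarrow> 'a set \<Rightarrow> bool" where
  "hom_fixing f K \<longleftrightarrow>
     (\<forall>x y. f (x + y) = f x + f y) \<and> (\<forall>x y. f (x * y) = f x * f y) \<and> (\<forall>c\<in>K. f c = c)"

definition is_subfield :: "'a::field set \<Rightarrow> bool" where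
  "is_subfield K \<longleftrightarrow> 0 \<in> K \<and> 1 \<in> K \<and>
     (\<forall>x\<in>K. \<forall>y\<in>K. x + y \<in> K \<and> x - y \<in> K \<and> x * y \<in> K \<and> x / y \<in> K)"

definition lin_indep_over :: "'a::field set \<Rightarrow> nat set \<Rightarrow> (nat \<Rightarrow> nat \<Rightarrow> 'a) \<Rightarrow> nat \<Rightarrow> bool" where
  "lin_indep_over K I B i \<longleftrightarrow>
     (\<forall>c. (\<forall>l<i. c l \<in> K) \<longrightarrow> (\<forall>t\<in>I. (\<Sum>l<i. c l * B l t) = 0) \<longrightarrow> (\<forall>l<i. c l = 0))"

definition sym_form :: "('a::field \<Rightarrow> 'a) \<Rightarrow> nat set \<Rightarrow> (nat \<Rightarrow> 'a) \<Rightarrow> (nat \<Rightarrow> 'a) \<Rightarrow> 'a" where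
  "sym_form f I a b = (\<Sum>t\<in>I. a t * f (b t) + f (a t) * b t)"

text \<open>\<open>Vpairs ph s {1..u}\<close> and \<open>Wpairs ph s {1..u} B i\<close> are V_{s,u} and W_{s,u,H} with the
  coordinate x_{2t-1} stored as \<open>a t\<close> and x_{2t} as \<open>b t\<close>, for rows \<open>B l\<close> spanning H.\<close>

definition Vpairs :: "(nat \<Rightarrow> 'a::field \<Rightarrow> 'a) \<Rightarrow> nat \<Rightarrow> nat set \<Rightarrow> ((nat \<Rightarrow> 'a) \<times> (nat \<Rightarrow> 'a)) set" where
  "Vpairs ph s I =
     {(a, b). a \<in> I \<rightarrow>\<^sub>E UNIV \<and> b \<in> I \<rightarrow>\<^sub>E UNIV \<and> (\<forall>j\<le>s. sym_form (ph j) I a b = 0)}"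

definition Wpairs :: "(nat \<Rightarrow> 'a::field \<Rightarrow> 'a) \<Rightarrow> nat \<Rightarrow> nat set \<Rightarrow> (nat \<Rightarrow> nat \<Rightarrow> 'a) \<Rightarrow> nat
                      \<Rightarrow> ((nat \<Rightarrow> 'a) \<times> (nat \<Rightarrow> 'a)) set" where
  "Wpairs ph s I B i = {(a, b) \<in> Vpairs ph s I. \<forall>l<i. (\<Sum>t\<in>I. B l t * b t) = 0}"

definition eliminate :: "(nat \<Rightarrow> nat \<Rightarrow> 'a::field) \<Rightarrow> nat \<Rightarrow> nat \<Rightarrow> nat \<Rightarrow> nat \<Rightarrow> 'a" where
  "eliminate B i k l t = B l t - B l k * B i t / B i k"

lemma hom_fixing_simps:
  assumes "hom_fixing f K"
  shows "f (x + y) = f x + f y" "f (x * y) = f x * f y" "c \<in> K \<Longrightarrow> f c = c"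
    "f 0 = 0" "f (- x) = - f x" "f (x - y) = f x - f y" "f (sum g A) = (\<Sum>a\<in>A. f (g a))"
proof -
  show add: "f (x + y) = f x + f y" for x y
    using assms by (simp add: hom_fixing_def)
  show "f (x * y) = f x * f y" "c \<in> K \<Longrightarrow> f c = c"
    using assms by (simp_all add: hom_fixing_def)
  show zero: "f 0 = 0"
    using add[of 0 0] by (metis add.right_neutral add_left_cancel)
  show minus: "f (- x) = - f x" for x
    using add[of x "- x"] zero by (simp add: eq_neg_iff_add_eq_0 add.commute)
  show "f (x - y) = f x - f y"
    using add[of x "- y"] minus[of y] by simp
  show "f (sum g A) = (\<Sum>a\<in>A. f (g a))"
    by (induct A rule: infinite_finite_induct) (simp_all add: zero add)
qed

lemma sym_form_cong:
  "(\<And>t. t \<in> I \<Longrightarrow> a t = a' t) \<Longrightarrow> (\<And>t. t \<in> I \<Longrightarrow> b t = b' t)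
    \<Longrightarrow> sym_form f I a b = sym_form f I a' b'"
  unfolding sym_form_def by (intro sum.cong) auto

lemma sym_form_eliminate_pivot:
  assumes f: "hom_fixing f K" and "finite I" "k \<in> I" and g_in_K: "\<forall>t\<in>I. g t \<in> K"
    and pivot_eq: "b k = - (\<Sum>t\<in>I-{k}. g t * b t)"
  shows "sym_form f I a b = sym_form f (I - {k}) (\<lambda>t. a t - g t * a k) b"
proof -
  note f_simps = hom_fixing_simps[OF f]
  have fb: "f (b k) = - (\<Sum>t\<in>I-{k}. g t * f (b t))"
    using g_in_K by (simp add: pivot_eq f_simps)
  have "sym_form f I a b =
      a k * f (b k) + f (a k) * b k + (\<Sum>t\<in>I-{k}. a t * f (b t) + f (a t) * b t)"
    using assms by (simp add: sym_form_def sum.remove)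
  also have "\<dots> = (\<Sum>t\<in>I-{k}. a t * f (b t) + f (a t) * b t
                      - a k * (g t * f (b t)) - f (a k) * (g t * b t))"
    by (subst fb, subst pivot_eq)
       (simp add: sum_subtractf sum_distrib_left sum.distrib algebra_simps)
  also have "\<dots> = sym_form f (I - {k}) (\<lambda>t. a t - g t * a k) b"
    unfolding sym_form_def using g_in_K by (intro sum.cong) (simp_all add: f_simps algebra_simps)
  finally show ?thesis .
qed

lemma constraint_eliminate_pivot:
  fixes b c g :: "nat \<Rightarrow> 'a::field"
  assumes "finite I" "k \<in> I" and "b k = - (\<Sum>t\<in>I-{k}. g t * b t)"
  shows "(\<Sum>t\<in>I. c t * b t) = (\<Sum>t\<in>I-{k}. (c t - c k * g t) * b t)"
  using assms by (simp add: sum.remove sum_distrib_left sum_subtractf algebra_simps)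

lemma is_subfield_sum:
  assumes "is_subfield K" and "\<forall>x\<in>A. f x \<in> K"
  shows "sum f A \<in> K"
  using assms(2)
proof (induction A rule: infinite_finite_induct)
  case (insert x A)
  then show ?case using assms(1) by (simp add: is_subfield_def)
qed (use assms(1) in \<open>simp_all add: is_subfield_def\<close>)

lemma eliminate_in_subfield:
  assumes "is_subfield K" and "B l t \<in> K" "B l k \<in> K" "B i t \<in> K" "B i k \<in> K"
  shows "eliminate B i k l t \<in> K"
  using assms unfolding eliminate_def is_subfield_def by (metis times_divide_eq_right)

lemma eliminate_pivot_column: "B i k \<noteq> 0 \<Longrightarrow> eliminate B i k l k = 0"
  by (simp add: eliminate_def)

lemma lin_indep_over_row_nonzero:
  assumes "is_subfield K" and "lin_indep_over K I B (Suc i)"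
  shows "\<exists>t\<in>I. B i t \<noteq> 0"
proof (rule ccontr)
  assume "\<not> (\<exists>t\<in>I. B i t \<noteq> 0)"
  then have "\<forall>t\<in>I. (\<Sum>l<Suc i. (if l = i then 1 else 0) * B l t) = 0"
    by simp
  moreover have "\<forall>l<Suc i. (if l = i then 1 else 0) \<in> K"
    using assms(1) by (simp add: is_subfield_def)
  ultimately have "\<forall>l<Suc i. (if l = i then 1 else 0 :: 'a) = 0"
    using assms(2)[unfolded lin_indep_over_def, THEN spec[of _ "\<lambda>l. if l = i then 1 else 0"]]
    by blast
  then show False
    by auto
qed

context
  fixes I :: "nat set" and B :: "nat \<Rightarrow> nat \<Rightarrow> 'a::field" and i k :: nat
  assumes finite_I: "finite I" and k_in_I: "k \<in> I" and pivot_nonzero: "B i k \<noteq> 0"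
begin

lemma constraints_eliminate_pivot:
  "(\<forall>l<Suc i. (\<Sum>t\<in>I. B l t * b t) = 0) \<longleftrightarrow>
     b k = - (\<Sum>t\<in>I-{k}. B i t / B i k * b t) \<and>
     (\<forall>l<i. (\<Sum>t\<in>I-{k}. eliminate B i k l t * b t) = 0)"
proof -
  have "(\<Sum>t\<in>I. B i t * b t) = B i k * (b k + (\<Sum>t\<in>I-{k}. B i t / B i k * b t))"
    using finite_I k_in_I pivot_nonzero by (simp add: sum.remove sum_distrib_left algebra_simps)
  then have pivot_row: "(\<Sum>t\<in>I. B i t * b t) = 0 \<longleftrightarrow> b k = - (\<Sum>t\<in>I-{k}. B i t / B i k * b t)"
    using pivot_nonzero by (simp add: eq_neg_iff_add_eq_0)
  have other_rows: "(\<Sum>t\<in>I. B l t * b t) = (\<Sum>t\<in>I-{k}. eliminate B i k l t * b t)"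
    if "b k = - (\<Sum>t\<in>I-{k}. B i t / B i k * b t)" for l
    using constraint_eliminate_pivot[OF finite_I k_in_I that, of "B l"]
    by (simp add: eliminate_def)
  show ?thesis
    using pivot_row other_rows by (auto simp: less_Suc_eq)
qed

lemma lin_indep_over_eliminate:
  assumes K: "is_subfield K" and BK: "\<forall>l<Suc i. \<forall>t\<in>I. B l t \<in> K"
    and indep: "lin_indep_over K I B (Suc i)"
  shows "lin_indep_over K (I - {k}) (eliminate B i k) i"
  unfolding lin_indep_over_def
proof (intro allI impI)
  fix c l assume cK: "\<forall>l<i. c l \<in> K"
    and cz: "\<forall>t\<in>I-{k}. (\<Sum>l<i. c l * eliminate B i k l t) = 0" and "l < i"
  define S where "S = (\<Sum>l<i. c l * B l k)"
  define c' where "c' = c(i := - S / B i k)"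
  have "S \<in> K"
    unfolding S_def using K cK BK k_in_I
    by (intro is_subfield_sum) (auto simp: is_subfield_def)
  then have "- S / B i k \<in> K"
    using K BK k_in_I unfolding is_subfield_def by (metis diff_0 lessI)
  then have c'K: "\<forall>l<Suc i. c' l \<in> K"
    using cK by (simp add: c'_def)
  have "(\<Sum>l<Suc i. c' l * B l t) = (\<Sum>l<i. c l * eliminate B i k l t)" for t
    by (simp add: c'_def S_def eliminate_def sum_subtractf sum_distrib_left sum_distrib_right
        sum_divide_distrib algebra_simps)
  moreover have "(\<Sum>l<i. c l * eliminate B i k l k) = 0"
    using pivot_nonzero by (simp add: eliminate_pivot_column)
  ultimately have "\<forall>t\<in>I. (\<Sum>l<Suc i. c' l * B l t) = 0"
    using cz by (metis Diff_iff empty_iff insert_iff)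
  then have "\<forall>l<Suc i. c' l = 0"
    using indep c'K by (simp add: lin_indep_over_def)
  then have "c' l = 0"
    using \<open>l < i\<close> by simp
  then show "c l = 0"
    using \<open>l < i\<close> by (simp add: c'_def)
qed

lemma Wpairs_Suc_iff:
  assumes hom: "\<And>j. hom_fixing (ph j) K" and ratio_in_K: "\<forall>t\<in>I. B i t / B i k \<in> K"
    and a: "a \<in> I \<rightarrow>\<^sub>E UNIV" and b: "b \<in> I \<rightarrow>\<^sub>E UNIV"
  shows "(a, b) \<in> Wpairs ph s I B (Suc i) \<longleftrightarrow>
           b k = - (\<Sum>t\<in>I-{k}. B i t / B i k * b t) \<and>
           (restrict (\<lambda>t. a t - B i t / B i k * a k) (I-{k}), restrict b (I-{k}))
             \<in> Wpairs ph s (I-{k}) (eliminate B i k) i"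
proof -
  have forms: "sym_form (ph j) I a b =
        sym_form (ph j) (I-{k}) (restrict (\<lambda>t. a t - B i t / B i k * a k) (I-{k}))
          (restrict b (I-{k}))"
    if "b k = - (\<Sum>t\<in>I-{k}. B i t / B i k * b t)" for j
    unfolding sym_form_eliminate_pivot[OF hom finite_I k_in_I ratio_in_K that]
    by (rule sym_form_cong) auto
  have "(\<Sum>t\<in>I-{k}. eliminate B i k l t * restrict b (I-{k}) t)
      = (\<Sum>t\<in>I-{k}. eliminate B i k l t * b t)" for l by (intro sum.cong) auto
  then show ?thesis
    using a b forms constraints_eliminate_pivot[of b]
    by (auto simp: Wpairs_def Vpairs_def)
qed

lemma card_Wpairs_eliminate:
  assumes hom: "\<And>j. hom_fixing (ph j) K" and ratio_in_K: "\<forall>t\<in>I. B i t / B i k \<in> K"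
  shows "card (Wpairs ph s I B (Suc i))
           = card (UNIV :: 'a set) * card (Wpairs ph s (I-{k}) (eliminate B i k) i)"
proof -
  define g where "g t = B i t / B i k" for t
  define F where "F = (\<lambda>(a :: nat \<Rightarrow> 'a, b :: nat \<Rightarrow> 'a).
      (a k, (restrict (\<lambda>t. a t - g t * a k) (I-{k}), restrict b (I-{k}))))"
  define G where "G = (\<lambda>(z, a, b).
      ((\<lambda>t\<in>I. if t = k then z else a t + g t * z),
       (\<lambda>t\<in>I. if t = k then - (\<Sum>t\<in>I-{k}. g t * b t) else b t)))"
  let ?W = "Wpairs ph s I B (Suc i)" and ?W' = "Wpairs ph s (I-{k}) (eliminate B i k) i"
  note iff = Wpairs_Suc_iff[OF hom ratio_in_K, folded g_def]
  have in_PiE: "a \<in> J \<rightarrow>\<^sub>E UNIV" "b \<in> J \<rightarrow>\<^sub>E UNIV" if "(a, b) \<in> Wpairs ph s J C n" for a b J C n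
    using that by (auto simp: Wpairs_def Vpairs_def)
  have FG: "F (G (z, a, b)) = (z, a, b)" if "(a, b) \<in> ?W'" for z a b
  proof -
    have "a \<in> I-{k} \<rightarrow>\<^sub>E UNIV" "b \<in> I-{k} \<rightarrow>\<^sub>E UNIV" using in_PiE[OF that] by simp_all
    then show ?thesis
      using k_in_I by (auto simp: F_def G_def fun_eq_iff PiE_def extensional_def)
  qed
  have GF: "G (F (a, b)) = (a, b)" if "(a, b) \<in> ?W" for a b
  proof -
    have a: "a \<in> I \<rightarrow>\<^sub>E UNIV" and b: "b \<in> I \<rightarrow>\<^sub>E UNIV" using in_PiE[OF that] by simp_all
    then have "b k = - (\<Sum>t\<in>I-{k}. g t * b t)" using iff[OF a b] that by simp
    then show ?thesis
      using a b by (auto simp: F_def G_def fun_eq_iff PiE_def extensional_def)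
  qed
  have "bij_betw F ?W (UNIV \<times> ?W')"
  proof (rule bij_betw_byWitness[where f' = G])
    show "\<forall>p\<in>?W. G (F p) = p" using GF by auto
    show "\<forall>q\<in>UNIV \<times> ?W'. F (G q) = q" using FG by auto
    show "F ` ?W \<subseteq> UNIV \<times> ?W'"
    proof (rule image_subsetI)
      fix p assume "p \<in> ?W"
      then obtain a b where p: "p = (a, b)" and ab: "(a, b) \<in> ?W" by (cases p) auto
      have "snd (F (a, b)) \<in> ?W'" using iff[OF in_PiE[OF ab]] ab by (simp add: F_def)
      then show "F p \<in> UNIV \<times> ?W'" by (simp add: p mem_Times_iff)
    qed
    show "G ` (UNIV \<times> ?W') \<subseteq> ?W"
    proof (rule image_subsetI)
      fix q :: "'a \<times> _" assume "q \<in> UNIV \<times> ?W'"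
      then obtain z a b where q: "q = (z, a, b)" and ab: "(a, b) \<in> ?W'" by (cases q) auto
      obtain a' b' where G: "G q = (a', b')" by (cases "G q")
      then have a': "a' \<in> I \<rightarrow>\<^sub>E UNIV" and b': "b' \<in> I \<rightarrow>\<^sub>E UNIV"
        and "b' k = - (\<Sum>t\<in>I-{k}. g t * b' t)"
        using k_in_I by (auto simp: G_def q)
      moreover have "snd (F (a', b')) \<in> ?W'" using FG[OF ab, of z] ab G by (simp add: q)
      ultimately show "G q \<in> ?W"
        using iff[OF a' b'] G by (simp add: F_def)
    qed
  qed
  then show ?thesis
    by (simp add: bij_betw_same_card card_cartesian_product)
qed

end

lemma sym_form_reindex:
  assumes "bij_betw h J I"
  shows "sym_form f J (a \<circ> h) (b \<circ> h) = sym_form f I a b"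
  using sum.reindex_bij_betw[OF assms] by (simp add: sym_form_def)

lemma finite_Vpairs:
  "finite I \<Longrightarrow> finite (Vpairs ph s I :: ((nat \<Rightarrow> 'a::{field,finite}) \<times> _) set)"
  by (rule finite_subset[of _ "(I \<rightarrow>\<^sub>E UNIV) \<times> (I \<rightarrow>\<^sub>E UNIV)"])
     (auto simp: Vpairs_def finite_PiE)

lemma card_Vpairs_le_reindex:
  fixes ph :: "nat \<Rightarrow> 'a::{field,finite} \<Rightarrow> 'a"
  assumes "finite J" and h: "bij_betw h J I"
  shows "card (Vpairs ph s I) \<le> card (Vpairs ph s J)"
proof -
  define M where "M = (\<lambda>(a :: nat \<Rightarrow> 'a, b :: nat \<Rightarrow> 'a). (restrict (a \<circ> h) J, restrict (b \<circ> h) J))"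
  have ext_eq: "a = a'" if "a \<in> I \<rightarrow>\<^sub>E UNIV" "a' \<in> I \<rightarrow>\<^sub>E UNIV" "\<forall>y\<in>J. a (h y) = a' (h y)"
    for a a' :: "nat \<Rightarrow> 'a"
  proof
    fix x show "a x = a' x"
    proof (cases "x \<in> I")
      case True
      then obtain y where "y \<in> J" "x = h y" using h by (auto simp: bij_betw_def)
      then show ?thesis using that(3) by simp
    next
      case False
      then show ?thesis using that(1,2) by (simp add: PiE_def extensional_def)
    qed
  qed
  have "inj_on M (Vpairs ph s I)"
  proof (rule inj_onI)
    fix p q assume "p \<in> Vpairs ph s I" "q \<in> Vpairs ph s I" and "M p = M q"
    moreover obtain a b a' b' where pq: "p = (a, b)" "q = (a', b')" by (cases p, cases q)
    ultimately have "a \<in> I \<rightarrow>\<^sub>E UNIV" "a' \<in> I \<rightarrow>\<^sub>E UNIV" "b \<in> I \<rightarrow>\<^sub>E UNIV" "b' \<in> I \<rightarrow>\<^sub>E UNIV"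
      and "restrict (a \<circ> h) J = restrict (a' \<circ> h) J" "restrict (b \<circ> h) J = restrict (b' \<circ> h) J"
      by (simp_all add: Vpairs_def M_def)
    then have "a = a'" "b = b'"
      by (metis ext_eq comp_apply restrict_apply')+
    then show "p = q" by (simp add: pq)
  qed
  moreover have "M ` Vpairs ph s I \<subseteq> Vpairs ph s J"
  proof (rule image_subsetI)
    fix p assume "p \<in> Vpairs ph s I"
    moreover obtain a b where "p = (a, b)" by (cases p)
    moreover have "sym_form f J (restrict (a \<circ> h) J) (restrict (b \<circ> h) J) = sym_form f I a b"
      for f using sym_form_reindex[OF h, of f a b] by (simp add: sym_form_def)
    ultimately show "M p \<in> Vpairs ph s J"
      by (simp add: M_def Vpairs_def)
  qed
  ultimately show ?thesis
    using card_inj_on_le finite_Vpairs[OF \<open>finite J\<close>] by blast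
qed

lemma card_Vpairs_eq_card:
  fixes ph :: "nat \<Rightarrow> 'a::{field,finite} \<Rightarrow> 'a"
  assumes "finite I" "finite J" and "card I = card J"
  shows "card (Vpairs ph s I) = card (Vpairs ph s J)"
proof -
  obtain h where h: "bij_betw h J I"
    using finite_same_card_bij assms by metis
  show ?thesis
    using card_Vpairs_le_reindex[OF \<open>finite J\<close> h] bij_betw_inv_into[OF h]
      card_Vpairs_le_reindex[OF \<open>finite I\<close>] by (metis le_antisym)
qed

theorem card_Wpairs:
  fixes ph :: "nat \<Rightarrow> 'a::{field,finite} \<Rightarrow> 'a"
  assumes hom: "\<And>j. hom_fixing (ph j) K" and K: "is_subfield K"
  shows "finite I \<Longrightarrow> \<forall>l<i. \<forall>t\<in>I. B l t \<in> K \<Longrightarrow> lin_indep_over K I B i \<Longrightarrow>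
    card (Wpairs ph s I B i) = card (UNIV :: 'a set) ^ i * card (Vpairs ph s {1..card I - i})"
proof (induction i arbitrary: I B)
  case 0
  have "Wpairs ph s I B 0 = Vpairs ph s I" by (auto simp: Wpairs_def)
  then show ?case using card_Vpairs_eq_card[of I "{1..card I}"] 0 by simp
next
  case (Suc i)
  obtain k where k: "k \<in> I" and pivot: "B i k \<noteq> 0"
    using lin_indep_over_row_nonzero[OF K Suc.prems(3)] by blast
  have ratio_in_K: "\<forall>t\<in>I. B i t / B i k \<in> K"
    using K Suc.prems(2) k by (simp add: is_subfield_def)
  have "\<forall>l<i. \<forall>t\<in>I-{k}. eliminate B i k l t \<in> K"
    using Suc.prems(2) k by (auto intro: eliminate_in_subfield[OF K])
  moreover have "lin_indep_over K (I - {k}) (eliminate B i k) i"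
    using lin_indep_over_eliminate[where I = I and B = B and i = i and k = k,
        OF Suc.prems(1) k pivot K Suc.prems(2,3)] .
  ultimately have "card (Wpairs ph s (I-{k}) (eliminate B i k) i)
      = card (UNIV :: 'a set) ^ i * card (Vpairs ph s {1..card I - Suc i})"
    using Suc.IH[of "I - {k}"] Suc.prems(1) k by simp
  then show ?case
    using card_Wpairs_eliminate[where I = I and B = B and i = i and k = k and ph = ph and K = K,
        OF Suc.prems(1) k pivot hom ratio_in_K] by simp
qed

lemma power_two_power_fixed:
  assumes "(c::'a::field) ^ 2 ^ e = c"
  shows "c ^ 2 ^ (e * r) = c"
proof (induction r)
  case (Suc r)
  have "c ^ 2 ^ (e * Suc r) = (c ^ 2 ^ (e * r)) ^ 2 ^ e"
    by (simp add: power_add power_mult[symmetric] mult.commute)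
  then show ?case using Suc assms by simp
qed simp

lemma char_two_power_add:
  assumes "CHAR('a::field) = 2"
  shows "((x::'a) + y) ^ 2 ^ k = x ^ 2 ^ k + y ^ 2 ^ k"
  using assms by (intro freshmans_dream') simp_all

lemma is_subfield_subfld:
  assumes "CHAR('a::field) = 2"
  shows "is_subfield (subfld e :: 'a set)"
proof -
  have minus_eq_plus: "x - y = x + y" for x y :: 'a
    by (rule minus_CHAR_2[OF assms])
  show ?thesis
    unfolding is_subfield_def subfld_def minus_eq_plus
    using char_two_power_add[OF assms] by (auto simp: power_mult_distrib power_divide)
qed

lemma hom_fixing_power_two:
  assumes "CHAR('a::field) = 2" and "e dvd k"
  shows "hom_fixing (\<lambda>x::'a. x ^ 2 ^ k) (subfld e)"
proof -
  obtain r where "k = e * r" using assms(2) by blast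
  then show ?thesis
    unfolding hom_fixing_def subfld_def
    using char_two_power_add[OF assms(1)] power_two_power_fixed[of _ e r]
    by (auto simp: power_mult_distrib)
qed

lemma hom_fixing_frob:
  assumes "CHAR('a::field) = 2" and "e dvd m" and "int e dvd l"
  shows "hom_fixing (frob m l :: 'a \<Rightarrow> 'a) (subfld e)"
proof -
  have "int e dvd l mod int m"
    using assms(2,3) by (simp add: dvd_mod)
  then have "e dvd nat (l mod int m)"
    by (metis dvd_0_right int_dvd_int_iff nat_eq_iff2)
  then show ?thesis
    unfolding frob_def using hom_fixing_power_two[OF assms(1)] by simp
qed

definition deinterleave :: "nat \<Rightarrow> (nat \<Rightarrow> 'a) \<Rightarrow> (nat \<Rightarrow> 'a) \<times> (nat \<Rightarrow> 'a)" where
  "deinterleave u x = ((\<lambda>t\<in>{1..u}. x (2 * t - 1)), (\<lambda>t\<in>{1..u}. x (2 * t)))"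

definition interleave :: "nat \<Rightarrow> (nat \<Rightarrow> 'a) \<times> (nat \<Rightarrow> 'a) \<Rightarrow> nat \<Rightarrow> 'a" where
  "interleave u = (\<lambda>(a, b). \<lambda>k\<in>{1..2 * u}. if odd k then a ((k + 1) div 2) else b (k div 2))"

lemma bij_betw_deinterleave:
  "bij_betw (deinterleave u) ({1..2 * u} \<rightarrow>\<^sub>E UNIV) (({1..u} \<rightarrow>\<^sub>E UNIV) \<times> ({1..u} \<rightarrow>\<^sub>E UNIV))"
proof (rule bij_betw_byWitness[where f' = "interleave u"])
  have odd_index: "(k + 1) div 2 \<in> {1..u}" "2 * ((k + 1) div 2) - 1 = k"
    if "k \<in> {1..2 * u}" "odd k" for k
    using that by (auto elim!: oddE)
  have even_index: "k div 2 \<in> {1..u}" "2 * (k div 2) = k" if "k \<in> {1..2 * u}" "even k" for k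
    using that by (auto elim!: evenE)
  show "\<forall>x\<in>{1..2 * u} \<rightarrow>\<^sub>E UNIV. interleave u (deinterleave u x) = x"
    using odd_index even_index
    by (auto simp: interleave_def deinterleave_def PiE_def extensional_def fun_eq_iff)
  show "\<forall>p\<in>({1..u} \<rightarrow>\<^sub>E UNIV) \<times> ({1..u} \<rightarrow>\<^sub>E UNIV). deinterleave u (interleave u p) = p"
    by (auto simp: interleave_def deinterleave_def PiE_def extensional_def fun_eq_iff)
  show "deinterleave u ` ({1..2 * u} \<rightarrow>\<^sub>E UNIV) \<subseteq> ({1..u} \<rightarrow>\<^sub>E UNIV) \<times> ({1..u} \<rightarrow>\<^sub>E UNIV)"
    by (auto simp: deinterleave_def)
  show "interleave u ` (({1..u} \<rightarrow>\<^sub>E UNIV) \<times> ({1..u} \<rightarrow>\<^sub>E UNIV)) \<subseteq> {1..2 * u} \<rightarrow>\<^sub>E UNIV"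
    by (auto simp: interleave_def)
qed

lemma card_deinterleave:
  "card {x \<in> {1..2 * u} \<rightarrow>\<^sub>E UNIV. P (deinterleave u x)}
     = card {p \<in> ({1..u} \<rightarrow>\<^sub>E UNIV) \<times> ({1..u} \<rightarrow>\<^sub>E UNIV). P p}"
proof (rule bij_betw_same_card, rule bij_betw_subset[OF bij_betw_deinterleave])
  show "deinterleave u ` {x \<in> {1..2 * u} \<rightarrow>\<^sub>E UNIV. P (deinterleave u x)}
      = {p \<in> ({1..u} \<rightarrow>\<^sub>E UNIV) \<times> ({1..u} \<rightarrow>\<^sub>E UNIV). P p}"
  proof -
    have "deinterleave u ` {x \<in> {1..2 * u} \<rightarrow>\<^sub>E UNIV. P (deinterleave u x)}
        = {p \<in> deinterleave u ` ({1..2 * u} \<rightarrow>\<^sub>E UNIV). P p}"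
      by blast
    then show ?thesis
      unfolding bij_betw_imp_surj_on[OF bij_betw_deinterleave] .
  qed
qed auto

lemma sym_form_deinterleave:
  "sym_form f {1..u} (fst (deinterleave u x)) (snd (deinterleave u x))
     = (\<Sum>t=1..u. x (2 * t - 1) * f (x (2 * t)) + f (x (2 * t - 1)) * x (2 * t))"
  unfolding sym_form_def deinterleave_def by (intro sum.cong) auto

lemma sum_deinterleave_snd:
  "(\<Sum>t=1..u. c t * snd (deinterleave u x) t) = (\<Sum>t=1..u. c t * x (2 * t))"
  unfolding deinterleave_def by (intro sum.cong) auto

definition frob_system :: "nat \<Rightarrow> nat \<Rightarrow> nat \<Rightarrow> nat \<Rightarrow> nat \<Rightarrow> 'a::field \<Rightarrow> 'a" where
  "frob_system m n d e j = frob m ((int (n div e) - int j) * int d)"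

lemma card_Vset:
  "card (Vset m n d e s v :: (nat \<Rightarrow> 'a::field) set)
     = card (Vpairs (frob_system m n d e :: nat \<Rightarrow> 'a \<Rightarrow> 'a) s {1..v})"
proof -
  let ?P = "\<lambda>p. \<forall>j\<le>s. sym_form (frob_system m n d e j :: 'a \<Rightarrow> 'a) {1..v} (fst p) (snd p) = 0"
  have "Vset m n d e s v = {x \<in> {1..2 * v} \<rightarrow>\<^sub>E UNIV. ?P (deinterleave v x)}"
    unfolding Vset_def sym_form_deinterleave frob_system_def by simp
  moreover have "Vpairs (frob_system m n d e) s {1..v}
      = {p \<in> ({1..v} \<rightarrow>\<^sub>E UNIV) \<times> ({1..v} \<rightarrow>\<^sub>E UNIV). ?P p}"
    by (auto simp: Vpairs_def)
  ultimately show ?thesis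
    using card_deinterleave[where P = ?P and u = v] by simp
qed

lemma subset_Zset_iff_basis:
  assumes H: "H \<subseteq> {1..u} \<rightarrow>\<^sub>E subfld e" and b_in_H: "\<forall>l<i. b l \<in> H"
    and span: "\<forall>h\<in>H. \<exists>a. \<forall>t\<in>{1..u}. h t = (\<Sum>l<i. a l * b l t)"
  shows "H \<subseteq> Zset e u x \<longleftrightarrow> (\<forall>l<i. (\<Sum>t=1..u. b l t * x (2 * t)) = 0)"
proof
  assume "H \<subseteq> Zset e u x"
  then show "\<forall>l<i. (\<Sum>t=1..u. b l t * x (2 * t)) = 0"
    using b_in_H by (auto simp: Zset_def)
next
  assume orth: "\<forall>l<i. (\<Sum>t=1..u. b l t * x (2 * t)) = 0"
  show "H \<subseteq> Zset e u x"
  proof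
    fix h assume "h \<in> H"
    then obtain a where a: "\<forall>t\<in>{1..u}. h t = (\<Sum>l<i. a l * b l t)"
      using span by blast
    have "(\<Sum>t=1..u. h t * x (2 * t)) = (\<Sum>t=1..u. \<Sum>l<i. a l * (b l t * x (2 * t)))"
      using a by (simp add: sum_distrib_right mult.assoc)
    also have "\<dots> = (\<Sum>l<i. a l * (\<Sum>t=1..u. b l t * x (2 * t)))"
      by (subst sum.swap) (simp add: sum_distrib_left)
    also have "\<dots> = 0"
      using orth by simp
    finally show "h \<in> Zset e u x"
      using \<open>h \<in> H\<close> H by (auto simp: Zset_def)
  qed
qed

lemma card_Wset:
  assumes "H \<subseteq> {1..u} \<rightarrow>\<^sub>E subfld e" and "\<forall>l<i. b l \<in> H"
    and "\<forall>h\<in>H. \<exists>a. \<forall>t\<in>{1..u}. h t = (\<Sum>l<i. a l * b l t)"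
  shows "card (Wset m n d e s u H) = card (Wpairs (frob_system m n d e) s {1..u} b i)"
proof -
  let ?P = "\<lambda>p. (\<forall>j\<le>s. sym_form (frob_system m n d e j) {1..u} (fst p) (snd p) = 0)
                     \<and> (\<forall>l<i. (\<Sum>t=1..u. b l t * snd p t) = 0)"
  have "Wset m n d e s u H = {x \<in> {1..2 * u} \<rightarrow>\<^sub>E UNIV. ?P (deinterleave u x)}"
    unfolding Wset_def Vset_def sym_form_deinterleave sum_deinterleave_snd
      subset_Zset_iff_basis[OF assms] frob_system_def by auto
  moreover have "Wpairs (frob_system m n d e) s {1..u} b i
      = {p \<in> ({1..u} \<rightarrow>\<^sub>E UNIV) \<times> ({1..u} \<rightarrow>\<^sub>E UNIV). ?P p}"
    by (auto simp: Wpairs_def Vpairs_def)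
  ultimately show ?thesis
    using card_deinterleave[where P = ?P and u = u] by simp
qed

theorem lemma6p1:
  fixes m n d e s u i :: nat and H :: "(nat \<Rightarrow> 'a::{field,finite}) set"
  assumes "m > 0" "n > 0" "d > 0" "e > 0"
    and "m = 2 * n" and "e = gcd n d" and "e = gcd m d"
    and "CHAR('a) = 2" and "card (UNIV :: 'a set) = 2 ^ m"
    and "u \<ge> 1"
    and "is_subspace e u H" and "has_dim e u H i"
  shows "card (Wset m n d e s u H) = 2 ^ (m * i) * card (Vset m n d e s (u - i) :: (nat \<Rightarrow> 'a) set)"
proof -
  obtain b where b_in_H: "\<forall>l<i. b l \<in> H" and indep: "lin_indep_over (subfld e) {1..u} b i"
    and span: "\<forall>h\<in>H. \<exists>a. (\<forall>l<i. a l \<in> subfld e) \<and> (\<forall>t\<in>{1..u}. h t = (\<Sum>l<i. a l * b l t))"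
    using assms(12) unfolding has_dim_def lin_indep_over_def by auto
  have H: "H \<subseteq> {1..u} \<rightarrow>\<^sub>E subfld e"
    using assms(11) by (simp add: is_subspace_def)
  then have b_entries: "\<forall>l<i. \<forall>t\<in>{1..u}. b l t \<in> subfld e"
    using b_in_H by auto
  have "e dvd m" "int e dvd int d"
    using assms(7) by simp_all
  then have hom: "hom_fixing (frob_system m n d e j :: 'a \<Rightarrow> 'a) (subfld e)" for j
    unfolding frob_system_def using hom_fixing_frob[OF assms(8)] by simp
  have "card (Wset m n d e s u H) = card (Wpairs (frob_system m n d e) s {1..u} b i)"
    using card_Wset[OF H b_in_H] span by meson
  also have "\<dots> = card (UNIV :: 'a set) ^ i
                     * card (Vpairs (frob_system m n d e :: nat \<Rightarrow> 'a \<Rightarrow> 'a) s {1..u - i})"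
    using card_Wpairs[where ph = "frob_system m n d e",
        OF hom is_subfield_subfld[OF assms(8)] _ b_entries indep]
    by simp
  also have "\<dots> = 2 ^ (m * i) * card (Vset m n d e s (u - i) :: (nat \<Rightarrow> 'a) set)"
    by (simp add: card_Vset assms(9) power_mult)
  finally show ?thesis .
qed

end
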